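(* If $\Phi=(\varphi_n)_{n\in\mathbb{N}}$ is a depth-bounded fuzzy simulation between fuzzy automata $\mathcal{A}$ and $\mathcal{A}'$, then for every $n\in\mathbb{N}$ and every $\alpha\in\mathcal{F}^{n}_{\to}$ we have $\varphi_n^{-1}\circ\alpha^{\mathcal{A}}\le\alpha^{\mathcal{A}'}$; in particular $\varphi_n(x,x')\le\bigwedge_{\alpha\in\mathcal{F}^n_{\to}}(\alpha^{\mathcal{A}}(x)\Rightarrow\alpha^{\mathcal{A}'}(x'))$ for all $(x,x')\in A\times A'$.
   Context: $\mathcal{L}=\langle L,\le,\otimes,\Rightarrow,0,1\rangle$ is a complete residuated lattice: $\langle L,\le,0,1\rangle$ is a complete lattice with least element $0$ and greatest element $1$, $\langle L,\otimes,1\rangle$ is a commutative monoid, and $x\otimes y\le z$ iff $x\le (y\Rightarrow z)$. Fuzzy sets/relations are maps into $L$ ordered pointwise; $\varphi^{-1}(b,a)=\varphi(a,b)$; $(\varphi\circ\psi)(a,c)=\bigvee_b\varphi(a,b)\otimes\psi(b,c)$, $(\varphi\circ g)(a)=\bigvee_b\varphi(a,b)\otimes g(b)$. A fuzzy automaton over $\Sigma$ is $\mathcal{A}=\langle A,\delta^{\mathcal{A}},\sigma^{\mathcal{A}},\tau^{\mathcal{A}}\rangle$ with $A$ nonempty, $\delta^{\mathcal{A}}:A\times\Sigma\times A\to L$, $\sigma^{\mathcal{A}},\tau^{\mathcal{A}}:A\to L$; $\delta^{\mathcal{A}}_s(x,y)=\delta^{\mathcal{A}}(x,s,y)$; similarly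 $\mathcal{A}'$ with states $A'$. The sets $\mathcal{F}^n_{\to}$ ($n\in\mathbb{N}$) are the smallest sets of formulas such that: $\tau\in\mathcal{F}^n_{\to}$; if $s\in\Sigma$ and $\alpha\in\mathcal{F}^n_{\to}$ then $(s\circ\alpha)\in\mathcal{F}^{n+1}_{\to}$; if $a\in L$ and $\alpha\in\mathcal{F}^n_{\to}$ then $(a\to\alpha)\in\mathcal{F}^n_{\to}$; if $\alpha,\beta\in\mathcal{F}^n_{\to}$ then $(\alpha\wedge\beta)\in\mathcal{F}^n_{\to}$. Semantics in $\mathcal{A}$ (a fuzzy set $\alpha^{\mathcal{A}}$ on $A$): $\tau^{\mathcal{A}}$ is the terminal fuzzy set; $(s\circ\alpha)^{\mathcal{A}}=\delta^{\mathcal{A}}_s\circ\alpha^{\mathcal{A}}$; $(a\to\alpha)^{\mathcal{A}}(x)=a\Rightarrow\alpha^{\mathcal{A}}(x)$; $(\alpha\wedge\beta)^{\mathcal{A}}(x)=\alpha^{\mathcal{A}}(x)\wedge\beta^{\mathcal{A}}(x)$. A depth-bounded fuzzy simulation between $\mathcal{A}$ and $\mathcal{A}'$ is a sequence $(\varphi_n)_{n\in\mathbb{N}}$ of fuzzy relations $A\times A'\to L$ with $\varphi_n\le\varphi_{n-1}$ ($n\ge1$), $\varphi_0^{-1}\circ\tau^{\mathcal{A}}\le\tau^{\mathcal{A}'}$, and $\varphi_n^{-1}\circ\delta^{\mathcal{A}}_s\le\delta^{\mathcal{A}'}_s\circ\varphi_{n-1}^{-1}$ for all $s\in\Sigma$,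 $n\ge1$. *)

theory Defs
  imports Main
begin

text \<open>Complete residuated lattice: the carrier is a type of class complete_lattice
(0 = bot, 1 = top); otimes is the monoid operation and res the residuum.\<close>
definition complete_residuated_lattice ::
  "('l::complete_lattice \<Rightarrow> 'l \<Rightarrow> 'l) \<Rightarrow> ('l \<Rightarrow> 'l \<Rightarrow> 'l) \<Rightarrow> bool" where
  "complete_residuated_lattice otimes res \<longleftrightarrow>
     (\<forall>x y z. otimes (otimes x y) z = otimes x (otimes y z)) \<and>
     (\<forall>x y. otimes x y = otimes y x) \<and>
     (\<forall>x. otimes x top = x) \<and>
     (\<forall>x y z. otimes x y \<le> z \<longleftrightarrow> x \<le> res y z)"

text \<open>Formulas: Tau is the terminal formula, Dia s a is (s o a), Imp c a is (c -> a),
Conj a b is (a /\ b).\<close>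
datatype ('s, 'l) fml = Tau | Dia 's "('s, 'l) fml" | Imp 'l "('s, 'l) fml"
  | Conj "('s, 'l) fml" "('s, 'l) fml"

inductive in_Fto :: "nat \<Rightarrow> ('s, 'l) fml \<Rightarrow> bool" where
  Fto_Tau: "in_Fto n Tau"
| Fto_Dia: "in_Fto n \<alpha> \<Longrightarrow> in_Fto (Suc n) (Dia s \<alpha>)"
| Fto_Imp: "in_Fto n \<alpha> \<Longrightarrow> in_Fto n (Imp c \<alpha>)"
| Fto_Conj: "in_Fto n \<alpha> \<Longrightarrow> in_Fto n \<beta> \<Longrightarrow> in_Fto n (Conj \<alpha> \<beta>)"

definition Fto :: "nat \<Rightarrow> ('s, 'l) fml set" where
  "Fto n = {\<alpha>. in_Fto n \<alpha>}"

text \<open>Semantics of a formula in a fuzzy automaton with transition function delta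
(delta x s y = delta_s(x,y)) and terminal fuzzy set tau.\<close>
fun sem :: "('l::complete_lattice \<Rightarrow> 'l \<Rightarrow> 'l) \<Rightarrow> ('l \<Rightarrow> 'l \<Rightarrow> 'l) \<Rightarrow>
    ('a \<Rightarrow> 's \<Rightarrow> 'a \<Rightarrow> 'l) \<Rightarrow> ('a \<Rightarrow> 'l) \<Rightarrow> ('s, 'l) fml \<Rightarrow> 'a \<Rightarrow> 'l" where
  "sem otimes res \<delta> \<tau> Tau x = \<tau> x"
| "sem otimes res \<delta> \<tau> (Dia s \<alpha>) x = (SUP y. otimes (\<delta> x s y) (sem otimes res \<delta> \<tau> \<alpha> y))"
| "sem otimes res \<delta> \<tau> (Imp c \<alpha>) x = res c (sem otimes res \<delta> \<tau> \<alpha> x)"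
| "sem otimes res \<delta> \<tau> (Conj \<alpha> \<beta>) x = inf (sem otimes res \<delta> \<tau> \<alpha> x) (sem otimes res \<delta> \<tau> \<beta> x)"

text \<open>Depth-bounded fuzzy simulation between A = (delta, sigma, tau) and A' = (delta', sigma', tau');
phi n x x' is phi_n(x,x').  The initial fuzzy sets play no role.\<close>
definition depth_bounded_fuzzy_simulation ::
  "('l::complete_lattice \<Rightarrow> 'l \<Rightarrow> 'l) \<Rightarrow>
   ('a \<Rightarrow> 's \<Rightarrow> 'a \<Rightarrow> 'l) \<Rightarrow> ('a \<Rightarrow> 'l) \<Rightarrow>
   ('b \<Rightarrow> 's \<Rightarrow> 'b \<Rightarrow> 'l) \<Rightarrow> ('b \<Rightarrow> 'l) \<Rightarrow>
   (nat \<Rightarrow> 'a \<Rightarrow> 'b \<Rightarrow> 'l) \<Rightarrow> bool" where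
  "depth_bounded_fuzzy_simulation otimes \<delta> \<tau> \<delta>' \<tau>' \<phi> \<longleftrightarrow>
     (\<forall>n\<ge>1. \<forall>x x'. \<phi> n x x' \<le> \<phi> (n - 1) x x') \<and>
     (\<forall>x'. (SUP x. otimes (\<phi> 0 x x') (\<tau> x)) \<le> \<tau>' x') \<and>
     (\<forall>s. \<forall>n\<ge>1. \<forall>x' y.
        (SUP x. otimes (\<phi> n x x') (\<delta> x s y)) \<le> (SUP y'. otimes (\<delta>' x' s y') (\<phi> (n - 1) y y')))"

end

theory Submission
  imports Defs
begin

text \<open>Every connective transports the inequality phi_n(x,x') \<otimes> alpha(x) \<le> alpha'(x') from the
  first automaton to the second: the terminal and transition conditions of the simulation handle
  Tau and Dia, the adjunction between product and residuum handles Imp, and monotonicity handles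
  Conj. The bound on phi_n is the same inequality read through the adjunction.\<close>

locale residuated_lattice =
  fixes otimes :: "'l::complete_lattice \<Rightarrow> 'l \<Rightarrow> 'l" (infixl "\<otimes>" 70)
    and res :: "'l \<Rightarrow> 'l \<Rightarrow> 'l"
  assumes residuated: "complete_residuated_lattice otimes res"
begin

lemma adjoint: "x \<otimes> y \<le> z \<longleftrightarrow> x \<le> res y z"
  using residuated unfolding complete_residuated_lattice_def by blast

lemma commute: "x \<otimes> y = y \<otimes> x"
  using residuated unfolding complete_residuated_lattice_def by blast

lemma assoc: "x \<otimes> y \<otimes> z = x \<otimes> (y \<otimes> z)"
  using residuated unfolding complete_residuated_lattice_def by blast

lemma residuum_cancel: "res y z \<otimes> y \<le> z"
  using adjoint by blast

lemma mono_left: "x \<le> y \<Longrightarrow> x \<otimes> z \<le> y \<otimes> z"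
  using adjoint order_trans by blast

lemma mono_right: "x \<le> y \<Longrightarrow> z \<otimes> x \<le> z \<otimes> y"
  using mono_left commute by metis

lemma SUP_distrib_right: "(SUP i\<in>I. f i) \<otimes> z = (SUP i\<in>I. f i \<otimes> z)"
proof (rule antisym)
  have "f i \<le> res z (SUP i\<in>I. f i \<otimes> z)" if "i \<in> I" for i
    using that adjoint by (meson SUP_upper)
  then show "(SUP i\<in>I. f i) \<otimes> z \<le> (SUP i\<in>I. f i \<otimes> z)"
    by (simp add: adjoint SUP_least)
  show "(SUP i\<in>I. f i \<otimes> z) \<le> (SUP i\<in>I. f i) \<otimes> z"
    by (rule SUP_least, rule mono_left) (rule SUP_upper)
qed

lemma SUP_distrib_left: "z \<otimes> (SUP i\<in>I. f i) = (SUP i\<in>I. z \<otimes> f i)"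
  using SUP_distrib_right by (simp add: commute)

lemma residuum_mono_under_product: "a \<otimes> u \<le> v \<Longrightarrow> a \<otimes> res c u \<le> res c v"
proof -
  assume "a \<otimes> u \<le> v"
  have "a \<otimes> res c u \<otimes> c = a \<otimes> (res c u \<otimes> c)" by (rule assoc)
  also have "\<dots> \<le> a \<otimes> u" by (rule mono_right[OF residuum_cancel])
  also have "\<dots> \<le> v" by fact
  finally show ?thesis by (simp add: adjoint)
qed

end

locale depth_bounded_simulation = residuated_lattice +
  fixes \<delta> :: "'q \<Rightarrow> 's \<Rightarrow> 'q \<Rightarrow> 'l::complete_lattice" and \<tau> :: "'q \<Rightarrow> 'l"
    and \<delta>' :: "'r \<Rightarrow> 's \<Rightarrow> 'r \<Rightarrow> 'l" and \<tau>' :: "'r \<Rightarrow> 'l"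
    and \<phi> :: "nat \<Rightarrow> 'q \<Rightarrow> 'r \<Rightarrow> 'l"
  assumes simulation: "depth_bounded_fuzzy_simulation otimes \<delta> \<tau> \<delta>' \<tau>' \<phi>"
begin

abbreviation sem\<^sub>A :: "('s, 'l) fml \<Rightarrow> 'q \<Rightarrow> 'l" where
  "sem\<^sub>A \<equiv> sem otimes res \<delta> \<tau>"

abbreviation sem\<^sub>A' :: "('s, 'l) fml \<Rightarrow> 'r \<Rightarrow> 'l" where
  "sem\<^sub>A' \<equiv> sem otimes res \<delta>' \<tau>'"

lemma relation_Suc_le: "\<phi> (Suc n) x x' \<le> \<phi> n x x'"
proof -
  have "\<forall>n\<ge>1. \<forall>x x'. \<phi> n x x' \<le> \<phi> (n - 1) x x'"
    using simulation unfolding depth_bounded_fuzzy_simulation_def by blast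
  from this[rule_format, of "Suc n"] show ?thesis by simp
qed

lemma relation_antimono: "m \<le> n \<Longrightarrow> \<phi> n x x' \<le> \<phi> m x x'"
proof (induction n rule: dec_induct)
  case (step n)
  then show ?case using relation_Suc_le[of n x x'] by order
qed simp

lemma terminal_le: "\<phi> n x x' \<otimes> \<tau> x \<le> \<tau>' x'"
proof -
  have "\<phi> n x x' \<otimes> \<tau> x \<le> \<phi> 0 x x' \<otimes> \<tau> x"
    by (rule mono_left[OF relation_antimono]) simp
  also have "\<dots> \<le> (SUP x. \<phi> 0 x x' \<otimes> \<tau> x)" by (rule SUP_upper) simp
  also have "\<dots> \<le> \<tau>' x'" using simulation unfolding depth_bounded_fuzzy_simulation_def by blast
  finally show ?thesis .
qed

lemma transition_le: "\<phi> (Suc n) x x' \<otimes> \<delta> x s y \<le> (SUP y'. \<delta>' x' s y' \<otimes> \<phi> n y y')"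
proof -
  have "\<phi> (Suc n) x x' \<otimes> \<delta> x s y \<le> (SUP x. \<phi> (Suc n) x x' \<otimes> \<delta> x s y)" by (rule SUP_upper) simp
  also have "\<dots> \<le> (SUP y'. \<delta>' x' s y' \<otimes> \<phi> n y y')"
  proof -
    have "\<forall>s. \<forall>n\<ge>1. \<forall>x' y. (SUP x. \<phi> n x x' \<otimes> \<delta> x s y) \<le> (SUP y'. \<delta>' x' s y' \<otimes> \<phi> (n - 1) y y')"
      using simulation unfolding depth_bounded_fuzzy_simulation_def by blast
    from this[rule_format, where s = s and n = "Suc n"] show ?thesis by simp
  qed
  finally show ?thesis .
qed

lemma transition_step:
  assumes "\<And>y y'. \<phi> n y y' \<otimes> f y \<le> g y'"
  shows "\<phi> (Suc n) x x' \<otimes> (SUP y. \<delta> x s y \<otimes> f y) \<le> (SUP y'. \<delta>' x' s y' \<otimes> g y')"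
proof -
  have "\<phi> (Suc n) x x' \<otimes> (\<delta> x s y \<otimes> f y) \<le> (SUP y'. \<delta>' x' s y' \<otimes> g y')" for y
  proof -
    have "\<phi> (Suc n) x x' \<otimes> (\<delta> x s y \<otimes> f y) = \<phi> (Suc n) x x' \<otimes> \<delta> x s y \<otimes> f y"
      by (simp add: assoc)
    also have "\<dots> \<le> (SUP y'. \<delta>' x' s y' \<otimes> \<phi> n y y') \<otimes> f y"
      by (rule mono_left[OF transition_le])
    also have "\<dots> = (SUP y'. \<delta>' x' s y' \<otimes> (\<phi> n y y' \<otimes> f y))"
      by (simp add: SUP_distrib_right assoc)
    also have "\<dots> \<le> (SUP y'. \<delta>' x' s y' \<otimes> g y')"
      by (rule SUP_mono) (use mono_right[OF assms] in blast)
    finally show ?thesis .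
  qed
  then show ?thesis by (simp add: SUP_distrib_left SUP_least)
qed

lemma relation_times_sem_le:
  assumes "in_Fto n \<alpha>"
  shows "\<phi> n x x' \<otimes> sem\<^sub>A \<alpha> x \<le> sem\<^sub>A' \<alpha> x'"
  using assms
proof (induction arbitrary: x x' rule: in_Fto.induct)
  case (Fto_Tau n)
  show ?case by (simp add: terminal_le)
next
  case (Fto_Dia n \<alpha> s)
  then show ?case by (simp add: transition_step)
next
  case (Fto_Imp n \<alpha> c)
  then show ?case by (simp add: residuum_mono_under_product)
next
  case (Fto_Conj n \<alpha> \<beta>)
  have "\<phi> n x x' \<otimes> inf (sem\<^sub>A \<alpha> x) (sem\<^sub>A \<beta> x) \<le> sem\<^sub>A' \<alpha> x'"
    using Fto_Conj.IH(1) mono_right[of "inf (sem\<^sub>A \<alpha> x) (sem\<^sub>A \<beta> x)"] order_trans inf_le1 by blast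
  moreover have "\<phi> n x x' \<otimes> inf (sem\<^sub>A \<alpha> x) (sem\<^sub>A \<beta> x) \<le> sem\<^sub>A' \<beta> x'"
    using Fto_Conj.IH(2) mono_right[of "inf (sem\<^sub>A \<alpha> x) (sem\<^sub>A \<beta> x)"] order_trans inf_le2 by blast
  ultimately show ?case by simp
qed

end

theorem mainTheorem8:
  fixes otimes :: "'l::complete_lattice \<Rightarrow> 'l \<Rightarrow> 'l" and res :: "'l \<Rightarrow> 'l \<Rightarrow> 'l"
    and \<delta> :: "'a \<Rightarrow> 's \<Rightarrow> 'a \<Rightarrow> 'l" and \<sigma> \<tau> :: "'a \<Rightarrow> 'l"
    and \<delta>' :: "'b \<Rightarrow> 's \<Rightarrow> 'b \<Rightarrow> 'l" and \<sigma>' \<tau>' :: "'b \<Rightarrow> 'l"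
    and \<phi> :: "nat \<Rightarrow> 'a \<Rightarrow> 'b \<Rightarrow> 'l"
  assumes "complete_residuated_lattice otimes res"
    and "depth_bounded_fuzzy_simulation otimes \<delta> \<tau> \<delta>' \<tau>' \<phi>"
  shows "(\<forall>n. \<forall>\<alpha>\<in>Fto n. \<forall>x'.
            (SUP x. otimes (\<phi> n x x') (sem otimes res \<delta> \<tau> \<alpha> x)) \<le> sem otimes res \<delta>' \<tau>' \<alpha> x')
       \<and> (\<forall>n x x'. \<phi> n x x' \<le>
            (INF \<alpha>\<in>Fto n. res (sem otimes res \<delta> \<tau> \<alpha> x) (sem otimes res \<delta>' \<tau>' \<alpha> x')))"
proof -
  interpret depth_bounded_simulation otimes res \<delta> \<tau> \<delta>' \<tau>' \<phi>
    using assms by unfold_locales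
  show ?thesis
    using relation_times_sem_le
    by (auto simp: Fto_def adjoint[symmetric] intro!: SUP_least INF_greatest)
qed

end
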